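(* Let $n \geq 2$ and let $\{X(h)\}_{h}$ be independent random variables indexed by the edges $h$ of the complete graph $K_n$ on vertex set $\{1,2,\ldots,n\}$, with $\mathbb{P}(X(h)=1) = p(h) = 1-\mathbb{P}(X(h)=0)$; for an edge $h$ with endvertices $u,v$ write $p(u,v)=p(v,u)=p(h)$. Let $G$ be the random graph on $\{1,\ldots,n\}$ whose edges are those $h$ with $X(h)=1$. Define \[\alpha_{low}(n) := \min_{u} \frac{1}{n-1}\sum_{v \neq u} p(u,v),\qquad \alpha_{up}(n) := \max_{u} \frac{1}{n-1}\sum_{v \neq u} p(u,v),\qquad \alpha_e(n) := \binom{n}{2}^{-1}\sum_{1 \leq u<v\leq n} p(u,v).\] Suppose that \[\frac{1}{n^{\beta}} \leq \alpha_{low}(n) \leq \alpha_{up}(n) \leq \max\left(\frac{1}{2},\, 1-\sqrt{\frac{\alpha_e(n)}{2}}\right) - \frac{1}{n^{\gamma}}\] for some constants $0<\beta<\frac{1}{2}$ and $0<\gamma<\frac{1}{2}-\beta$. Then \[\mathbb{P}\left(N_{ext}(G) \leq 3t(G)\right) \geq 1 - e^{-D(\log n)^2} - \mathbb{P}(E_{disc})\] for some constant $D>0$, where $E_{disc}$ is the event that $G$ is disconnected.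
   Context: A graph is Eulerian if it has a closed walk (circuit) using every edge exactly once. A graph $G$ is Eulerian extendable if it can be made Eulerian by adding edges of its complement $\overline{G}$ (pairs of distinct vertices not adjacent in $G$); the result is an Eulerian extension of $G$. $N_{ext}(G)$ denotes the minimum number of edges that must be added to $G$ to obtain an Eulerian extension of $G$. $t(G)$ denotes half the number of odd-degree vertices of $G$. The inequality in the conclusion is understood asymptotically, i.e. for all sufficiently large $n$. *)

theory Defs
  imports Complex_Main "HOL-Library.Extended_Nat"
begin

definition all_pairs :: "nat set \<Rightarrow> nat set set" where
  "all_pairs V = {e. \<exists>u v. u \<in> V \<and> v \<in> V \<and> u \<noteq> v \<and> e = {u, v}}"

definition Kn_edges :: "nat \<Rightarrow> nat set set" where
  "Kn_edges n = all_pairs {1..n}"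

definition degree :: "nat set set \<Rightarrow> nat \<Rightarrow> nat" where
  "degree E v = card {e \<in> E. v \<in> e}"

definition t_odd :: "nat set \<Rightarrow> nat set set \<Rightarrow> nat" where
  "t_odd V E = card {v \<in> V. odd (degree E v)} div 2"

fun walk_edges :: "nat list \<Rightarrow> nat set list" where
  "walk_edges (u # v # ws) = {u, v} # walk_edges (v # ws)"
| "walk_edges _ = []"

definition eulerian :: "nat set set \<Rightarrow> bool" where
  "eulerian E \<longleftrightarrow> (\<exists>ws. ws \<noteq> [] \<and> hd ws = last ws \<and>
      (\<forall>e \<in> set (walk_edges ws). card e = 2) \<and>
      distinct (walk_edges ws) \<and> set (walk_edges ws) = E)"

definition eulerian_extension :: "nat set \<Rightarrow> nat set set \<Rightarrow> nat set set \<Rightarrow> bool" where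
  "eulerian_extension V E F \<longleftrightarrow> E \<subseteq> F \<and> F \<subseteq> all_pairs V \<and> eulerian F"

(* N_ext(G); equals \<infinity> if G is not Eulerian extendable *)
definition N_ext :: "nat set \<Rightarrow> nat set set \<Rightarrow> enat" where
  "N_ext V E = (INF F \<in> {F. eulerian_extension V E F}. enat (card (F - E)))"

definition connected_graph :: "nat set \<Rightarrow> nat set set \<Rightarrow> bool" where
  "connected_graph V E \<longleftrightarrow>
     (\<forall>u \<in> V. \<forall>v \<in> V. (u, v) \<in> {(x, y). {x, y} \<in> E}\<^sup>*)"

definition graph_prob :: "nat \<Rightarrow> (nat set \<Rightarrow> real) \<Rightarrow> (nat set set \<Rightarrow> bool) \<Rightarrow> real" where
  "graph_prob n p P =
     (\<Sum>S \<in> {S. S \<subseteq> Kn_edges n \<and> P S}.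
        (\<Prod>h \<in> S. p h) * (\<Prod>h \<in> Kn_edges n - S. 1 - p h))"

definition alpha_low :: "nat \<Rightarrow> (nat set \<Rightarrow> real) \<Rightarrow> real" where
  "alpha_low n p = Min ((\<lambda>u. (\<Sum>v \<in> {1..n} - {u}. p {u, v}) / real (n - 1)) ` {1..n})"

definition alpha_up :: "nat \<Rightarrow> (nat set \<Rightarrow> real) \<Rightarrow> real" where
  "alpha_up n p = Max ((\<lambda>u. (\<Sum>v \<in> {1..n} - {u}. p {u, v}) / real (n - 1)) ` {1..n})"

definition alpha_e :: "nat \<Rightarrow> (nat set \<Rightarrow> real) \<Rightarrow> real" where
  "alpha_e n p = (\<Sum>h \<in> Kn_edges n. p h) / real (n choose 2)"

end

theory Submission
  imports Defs "HOL-Library.Multiset" "HOL-Real_Asymp.Real_Asymp"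
begin

(* If G is connected, Euler's theorem reduces the claim to finding a set J of non-edges of G with
   at most 3 t(G) elements whose odd-degree vertices are exactly those of G: then G + J is connected
   with all degrees even. Such a J is the symmetric difference of paths of length at most 3 in the
   complement of G joining the odd vertices in pairs. A short complement path from u to v exists
   as soon as the non-neighbourhoods of u and v are either large in total (then they meet, or u and
   v are not adjacent) or large in product compared to the number of edges (then some non-edge
   joins them). By Chernoff bounds, with probability 1 - exp(-Omega(n^(1 - 2 gamma))) every degree
   is below (n - 1) max(1/2, 1 - sqrt(alpha_e/2)) - Omega(n^(1 - gamma)) and the number of edges
   exceeds its mean by at most O(n^(2 - 2 gamma)), and then the condition holds for all pairs. *)

section \<open>Euler's theorem\<close>

definition trail :: "nat set set \<Rightarrow> nat list \<Rightarrow> bool" where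
  "trail F ws \<longleftrightarrow> ws \<noteq> [] \<and> (\<forall>e\<in>set (walk_edges ws). card e = 2) \<and>
     distinct (walk_edges ws) \<and> set (walk_edges ws) \<subseteq> F"

lemma walk_edges_append_Cons:
  "walk_edges (xs @ c # ys) = walk_edges (xs @ [c]) @ walk_edges (c # ys)"
  by (induction xs rule: induct_list012) auto

lemma walk_edges_snoc: "ws \<noteq> [] \<Longrightarrow> walk_edges (ws @ [z]) = walk_edges ws @ [{last ws, z}]"
  by (induction ws rule: induct_list012) auto

lemma walk_edges_subset_set: "e \<in> set (walk_edges ws) \<Longrightarrow> e \<subseteq> set ws"
  by (induction ws rule: walk_edges.induct) auto

lemma length_walk_edges: "length (walk_edges ws) = length ws - 1"
  by (induction ws rule: walk_edges.induct) auto

lemma walk_edges_if_distinct: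
  "distinct ws \<Longrightarrow> (\<forall>e\<in>set (walk_edges ws). card e = 2) \<and> distinct (walk_edges ws)"
proof (induction ws rule: walk_edges.induct)
  case (1 u w ws)
  have "{u, w} \<notin> set (walk_edges (w # ws))"
    using walk_edges_subset_set[of "{u, w}" "w # ws"] 1(2) by auto
  then show ?case using 1 by auto
qed auto

lemma even_walk_edges_at_plus_ends:
  "(\<forall>e\<in>set (walk_edges ws). card e = 2) \<Longrightarrow> ws \<noteq> [] \<Longrightarrow>
   even (length (filter (\<lambda>e. x \<in> e) (walk_edges ws)) + of_bool (hd ws = x) + of_bool (last ws = x))"
proof (induction ws rule: walk_edges.induct)
  case (1 u w ws)
  then have "u \<noteq> w" by (cases "u = w") auto
  with 1 show ?case by auto
qed auto

lemma odd_degree_walk_edges_iff: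
  assumes "ws \<noteq> []" "\<forall>e\<in>set (walk_edges ws). card e = 2" "distinct (walk_edges ws)"
  shows "odd (degree (set (walk_edges ws)) x) \<longleftrightarrow> (hd ws = x) \<noteq> (last ws = x)"
proof -
  have "degree (set (walk_edges ws)) x = length (filter (\<lambda>e. x \<in> e) (walk_edges ws))"
    unfolding degree_def using distinct_card[of "filter (\<lambda>e. x \<in> e) (walk_edges ws)"] assms(3)
    by simp
  then show ?thesis using even_walk_edges_at_plus_ends[OF assms(2,1), of x] by auto
qed

lemma closed_walk_rotate:
  assumes "hd ws = last ws" "w \<in> set ws"
  obtains ws' where "ws' \<noteq> []" "hd ws' = w" "last ws' = w"
    "mset (walk_edges ws') = mset (walk_edges ws)"
proof -
  obtain xs ys where ws: "ws = xs @ w # ys" using assms(2) split_list by metis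
  show ?thesis
  proof (cases xs)
    case Nil
    then show ?thesis using ws assms(1) that[of "w # ys"] by (auto split: if_splits)
  next
    case (Cons x xs')
    have "last (w # ys) = x" using assms(1) ws Cons by auto
    then obtain ys0 where ys0: "w # ys = ys0 @ [x]"
      by (metis append_butlast_last_id list.distinct(1))
    define ws' where "ws' = ys0 @ x # xs' @ [w]"
    have "walk_edges ws' = walk_edges (w # ys) @ walk_edges (x # xs' @ [w])"
      unfolding ws'_def by (subst walk_edges_append_Cons) (simp add: ys0)
    moreover have "walk_edges ws = walk_edges (x # xs' @ [w]) @ walk_edges (w # ys)"
      unfolding ws Cons using walk_edges_append_Cons[of "x # xs'" w ys] by simp
    moreover have "hd ws' = w"
      unfolding ws'_def by (metis hd_append list.sel(1) self_append_conv2 ys0 list.distinct(1))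
    ultimately show ?thesis using that[of ws'] unfolding ws'_def by auto
  qed
qed

lemma trail_if_mset_walk_edges_eq:
  assumes "trail F ws" "ws' \<noteq> []" "mset (walk_edges ws') = mset (walk_edges ws)"
  shows "trail F ws'"
proof -
  have "set (walk_edges ws') = set (walk_edges ws)" by (metis assms(3) set_mset_mset)
  moreover have "distinct (walk_edges ws')"
    using assms mset_eq_imp_distinct_iff unfolding trail_def by metis
  ultimately show ?thesis using assms unfolding trail_def by auto
qed

lemma trail_snoc:
  assumes "trail F ws" "{last ws, z} \<in> F" "last ws \<noteq> z" "{last ws, z} \<notin> set (walk_edges ws)"
  shows "trail F (ws @ [z])" and "length (walk_edges (ws @ [z])) = Suc (length (walk_edges ws))"
  using assms walk_edges_snoc[of ws z] unfolding trail_def by auto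

lemma all_pairs_doubleton_iff: "{a, b} \<in> all_pairs V \<longleftrightarrow> a \<in> V \<and> b \<in> V \<and> a \<noteq> b"
  unfolding all_pairs_def by (auto simp: doubleton_eq_iff)

lemma all_pairs_subset: "e \<in> all_pairs V \<Longrightarrow> e \<subseteq> V"
  unfolding all_pairs_def by auto

lemma all_pairs_obtain_other_end:
  assumes "e \<in> all_pairs V" "x \<in> e"
  obtains y where "e = {x, y}" "x \<noteq> y"
  using assms unfolding all_pairs_def by (auto simp: insert_commute)

lemma finite_all_pairs: "finite V \<Longrightarrow> finite (all_pairs V)"
  by (rule finite_subset[of _ "Pow V"]) (auto simp: all_pairs_def)

lemma reachable_from_walk:
  assumes "(x, c) \<in> {(x, y). {x, y} \<in> F}\<^sup>*" "x \<in> set ws"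
  shows "c \<in> set ws \<or> (\<exists>f\<in>F - set (walk_edges ws). \<exists>w\<in>set ws. w \<in> f)"
  using assms(1)
proof (induction rule: rtrancl_induct)
  case (step c d)
  then show ?case using walk_edges_subset_set by (cases "{c, d} \<in> set (walk_edges ws)") blast+
qed (use assms(2) in blast)

context
  fixes V :: "nat set" and F :: "nat set set" and ws :: "nat list"
  assumes edges: "F \<subseteq> all_pairs V" and trail_ws: "trail F ws"
    and longest: "\<And>ws'. trail F ws' \<Longrightarrow> length (walk_edges ws') \<le> length (walk_edges ws)"
begin

lemma longest_trail_uses_edges_at_last:
  assumes "e \<in> F" "last ws \<in> e"
  shows "e \<in> set (walk_edges ws)"
proof (rule ccontr)
  assume unused: "e \<notin> set (walk_edges ws)"
  obtain z where "e = {last ws, z}" "last ws \<noteq> z"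
    using all_pairs_obtain_other_end assms edges by blast
  then show False using trail_snoc[OF trail_ws] longest unused assms(1) by fastforce
qed

lemma longest_trail_closed:
  assumes "\<forall>v. even (degree F v)"
  shows "hd ws = last ws"
proof (rule ccontr)
  assume "hd ws \<noteq> last ws"
  then have "odd (degree (set (walk_edges ws)) (last ws))"
    using trail_ws odd_degree_walk_edges_iff unfolding trail_def by blast
  then have "{e \<in> set (walk_edges ws). last ws \<in> e} \<noteq> {e \<in> F. last ws \<in> e}"
    using assms unfolding degree_def by metis
  then show False using trail_ws longest_trail_uses_edges_at_last unfolding trail_def by blast
qed

end

lemma longest_closed_trail_covers:
  assumes edges: "F \<subseteq> all_pairs V" and conn: "connected_graph V F" and trail_ws: "trail F ws"
    and longest: "\<And>ws'. trail F ws' \<Longrightarrow> length (walk_edges ws') \<le> length (walk_edges ws)"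
    and closed: "hd ws = last ws" and e: "e \<in> F"
  shows "e \<in> set (walk_edges ws)"
proof (rule ccontr)
  assume unused: "e \<notin> set (walk_edges ws)"
  obtain c d where cd: "e = {c, d}" "c \<in> V" "c \<noteq> d"
    using e edges unfolding all_pairs_def by blast
  obtain x where x: "x \<in> set ws" "x \<in> V"
  proof -
    have "trail F [c, d]" using cd e unfolding trail_def by auto
    then have "walk_edges ws \<noteq> []" using longest by fastforce
    then obtain f where "f \<in> set (walk_edges ws)" by (cases "walk_edges ws") auto
    moreover obtain y z where "f = {y, z}" "y \<in> V"
      using calculation trail_ws edges unfolding trail_def all_pairs_def by blast
    ultimately show ?thesis using that walk_edges_subset_set by blast
  qed
  obtain f w where f: "f \<in> F" "f \<notin> set (walk_edges ws)" "w \<in> set ws" "w \<in> f"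
    using reachable_from_walk[of x c F ws] conn x cd unused e
    unfolding connected_graph_def by blast
  \<comment> \<open>rotated to end at w, the closed trail could be extended by the unused edge f\<close>
  obtain ws' where ws': "ws' \<noteq> []" "hd ws' = w" "last ws' = w"
    "mset (walk_edges ws') = mset (walk_edges ws)"
    using closed_walk_rotate[OF closed f(3)] .
  have "set (walk_edges ws') = set (walk_edges ws)"
    and "length (walk_edges ws') = length (walk_edges ws)"
    by (metis ws'(4) set_mset_mset, metis ws'(4) size_mset)
  moreover have "trail F ws'" using trail_if_mset_walk_edges_eq[OF trail_ws ws'(1,4)] .
  ultimately show False
    using longest_trail_uses_edges_at_last[OF edges, of ws' f] longest f ws'(3) by auto
qed

lemma eulerian_if_connected_even_degrees:
  assumes fin: "finite F" and edges: "F \<subseteq> all_pairs V" and conn: "connected_graph V F"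
    and even: "\<forall>v. even (degree F v)"
  shows "eulerian F"
proof -
  have "length (walk_edges ws) < Suc (card F)" if "trail F ws" for ws
    using that card_mono[OF fin] distinct_card unfolding trail_def by (metis le_imp_less_Suc)
  moreover have "trail F [0]" unfolding trail_def by simp
  ultimately obtain ws where tr: "trail F ws"
    and longest: "\<And>ws'. trail F ws' \<Longrightarrow> length (walk_edges ws') \<le> length (walk_edges ws)"
    using ex_has_greatest_nat[of "trail F" "[0]" "\<lambda>ws. length (walk_edges ws)"] by blast
  have "hd ws = last ws"
    using longest_trail_closed[OF edges tr longest even] .
  moreover have "F \<subseteq> set (walk_edges ws)"
    using longest_closed_trail_covers[OF edges conn tr longest] calculation by blast
  ultimately show ?thesis
    unfolding eulerian_def using tr unfolding trail_def by (intro exI[of _ ws]) auto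
qed

section \<open>Joins of the odd vertices in the complement\<close>

lemma degree_eq_0_if_notin:
  assumes "S \<subseteq> all_pairs V" "x \<notin> V"
  shows "degree S x = 0"
proof -
  have "{e \<in> S. x \<in> e} = {}" using assms all_pairs_subset by blast
  then show ?thesis unfolding degree_def by (metis card.empty)
qed

lemma degree_insert:
  assumes "finite S" "e \<notin> S"
  shows "degree (insert e S) x = degree S x + of_bool (x \<in> e)"
proof -
  have "{f \<in> insert e S. x \<in> f} = (if x \<in> e then insert e {f \<in> S. x \<in> f} else {f \<in> S. x \<in> f})"
    by auto
  then show ?thesis unfolding degree_def using assms by simp
qed

lemma degree_Un_disjoint:
  assumes "finite S" "finite J" "S \<inter> J = {}"
  shows "degree (S \<union> J) x = degree S x + degree J x"
proof -
  have "{e \<in> S \<union> J. x \<in> e} = {e \<in> S. x \<in> e} \<union> {e \<in> J. x \<in> e}" by auto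
  then show ?thesis unfolding degree_def using assms by (simp add: card_Un_disjoint disjoint_iff)
qed

lemma sum_degree_eq_twice_card:
  assumes "finite V" "S \<subseteq> all_pairs V"
  shows "(\<Sum>v\<in>V. degree S v) = 2 * card S"
proof -
  have "finite S" using assms finite_all_pairs finite_subset by blast
  then show ?thesis using assms(2)
  proof (induction S rule: finite_induct)
    case empty
    then show ?case by (simp add: degree_def)
  next
    case (insert e S)
    have "(\<Sum>v\<in>V. degree (insert e S) v) = (\<Sum>v\<in>V. degree S v) + (\<Sum>v\<in>V. of_bool (v \<in> e))"
      using insert by (simp add: degree_insert sum.distrib)
    also have "(\<Sum>v\<in>V. of_bool (v \<in> e)) = card (V \<inter> e)"
      using assms(1) by (simp add: sum.If_cases)
    also have "V \<inter> e = e" using insert(4) all_pairs_subset by blast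
    also have "card e = 2" using insert(4) unfolding all_pairs_def by auto
    finally show ?case using insert by simp
  qed
qed

lemma even_sum_iff_even_card_odd:
  "finite V \<Longrightarrow> even (\<Sum>v\<in>V. f v) \<longleftrightarrow> even (card {v\<in>V. odd (f v :: nat)})"
proof (induction V rule: finite_induct)
  case (insert x V)
  have "{v \<in> insert x V. odd (f v)} =
      (if odd (f x) then insert x {v\<in>V. odd (f v)} else {v\<in>V. odd (f v)})"
    by auto
  then show ?case using insert by auto
qed auto

lemma even_card_odd_degree:
  assumes "finite V" "S \<subseteq> all_pairs V"
  shows "even (card {v\<in>V. odd (degree S v)})"
  using sum_degree_eq_twice_card[OF assms] even_sum_iff_even_card_odd[OF assms(1), of "degree S"]
  by simp

lemma odd_degree_sym_diff:
  assumes "finite A" "finite B"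
  shows "odd (degree (sym_diff A B) x) \<longleftrightarrow> odd (degree A x) \<noteq> odd (degree B x)"
proof -
  define a b where "a = {e\<in>A. x \<in> e}" and "b = {e\<in>B. x \<in> e}"
  have fin: "finite a" "finite b" using assms unfolding a_def b_def by auto
  have le: "card (a \<inter> b) \<le> card a" "card (a \<inter> b) \<le> card b"
    using fin by (auto intro: card_mono)
  have "{e \<in> sym_diff A B. x \<in> e} = sym_diff a b" unfolding a_def b_def by auto
  moreover have "card (sym_diff a b) = card (a - b) + card (b - a)"
    using fin by (intro card_Un_disjoint) auto
  moreover have "card (a - b) = card a - card (a \<inter> b)" "card (b - a) = card b - card (a \<inter> b)"
    using fin by (simp_all add: card_Diff_subset_Int Int_commute)
  ultimately show ?thesis unfolding degree_def a_def[symmetric] b_def[symmetric]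
    using le by presburger
qed

definition non_neighbours :: "nat set \<Rightarrow> nat set set \<Rightarrow> nat \<Rightarrow> nat set" where
  "non_neighbours V S x = {w \<in> V. w \<noteq> x \<and> {x, w} \<notin> S}"

definition large_non_neighbourhoods :: "nat set \<Rightarrow> nat set set \<Rightarrow> bool" where
  "large_non_neighbourhoods V S \<longleftrightarrow> (\<forall>u\<in>V. \<forall>v\<in>V. u \<noteq> v \<longrightarrow>
     card V - 2 < card (non_neighbours V S u) + card (non_neighbours V S v) \<or>
     card S < card (non_neighbours V S u) * card (non_neighbours V S v))"

lemma card_non_neighbours_add_degree:
  assumes fin: "finite V" and edges: "S \<subseteq> all_pairs V" and u: "u \<in> V"
  shows "card (non_neighbours V S u) + degree S u = card V - 1"
proof -
  define N where "N = {w \<in> V. w \<noteq> u \<and> {u, w} \<in> S}"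
  have "bij_betw (\<lambda>w. {u, w}) N {e \<in> S. u \<in> e}"
  proof (rule bij_betwI')
    fix e assume e: "e \<in> {e \<in> S. u \<in> e}"
    then obtain w where "e = {u, w}" "u \<noteq> w"
      using edges all_pairs_obtain_other_end by blast
    then show "\<exists>w\<in>N. e = {u, w}"
      using e edges all_pairs_doubleton_iff unfolding N_def by blast
  qed (auto simp: N_def doubleton_eq_iff)
  then have "card N = degree S u" unfolding degree_def by (rule bij_betw_same_card)
  moreover have "V - {u} = non_neighbours V S u \<union> N"
    unfolding N_def non_neighbours_def by auto
  then have "card (V - {u}) = card (non_neighbours V S u) + card N"
    using fin by (simp add: card_Un_disjoint N_def non_neighbours_def disjoint_iff)
  ultimately show ?thesis using u fin by simp
qed

text \<open>Counting argument: A \<union> B avoids u and v, and (a, b) \<mapsto> {a, b} is injective on A \<times> B.\<close>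
lemma non_neighbours_joined_by_non_edge:
  assumes fin: "finite V" and edges: "S \<subseteq> all_pairs V" and large: "large_non_neighbourhoods V S"
    and uv: "u \<in> V" "v \<in> V" "u \<noteq> v" "{u, v} \<in> S"
    and disj: "non_neighbours V S u \<inter> non_neighbours V S v = {}"
  shows "\<exists>a\<in>non_neighbours V S u. \<exists>b\<in>non_neighbours V S v. {a, b} \<notin> S"
proof (rule ccontr)
  let ?A = "non_neighbours V S u" and ?B = "non_neighbours V S v"
  assume "\<not> ?thesis"
  then have AB: "(\<lambda>(a, b). {a, b}) ` (?A \<times> ?B) \<subseteq> S" by auto
  have fins: "finite ?A" "finite ?B" "finite S"
    using fin edges finite_all_pairs finite_subset unfolding non_neighbours_def by auto
  have "?A \<union> ?B \<subseteq> V - {u, v}"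
    using uv unfolding non_neighbours_def by (auto simp: insert_commute)
  then have "card ?A + card ?B \<le> card V - 2"
    using fin uv card_mono[of "V - {u, v}" "?A \<union> ?B"] card_Un_disjoint[OF fins(1,2) disj]
    by (simp add: card_Diff_subset)
  moreover have "inj_on (\<lambda>(a, b). {a, b}) (?A \<times> ?B)"
    using disj by (auto simp: inj_on_def doubleton_eq_iff)
  then have "card ?A * card ?B \<le> card S"
    using card_mono[OF fins(3) AB] by (simp add: card_image card_cartesian_product)
  moreover have "card V - 2 < card ?A + card ?B \<or> card S < card ?A * card ?B"
    using large uv unfolding large_non_neighbourhoods_def by blast
  ultimately show False by linarith
qed

lemma complement_path_short:
  assumes fin: "finite V" and edges: "S \<subseteq> all_pairs V" and large: "large_non_neighbourhoods V S"
    and uv: "u \<in> V" "v \<in> V" "u \<noteq> v"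
  obtains ws where "ws \<noteq> []" "distinct ws" "hd ws = u" "last ws = v" "length ws \<le> 4"
    "set (walk_edges ws) \<subseteq> all_pairs V - S"
proof (cases "{u, v} \<in> S")
  case False
  then show ?thesis using uv that[of "[u, v]"] by (auto simp: all_pairs_doubleton_iff)
next
  case adjacent: True
  let ?A = "non_neighbours V S u" and ?B = "non_neighbours V S v"
  show ?thesis
  proof (cases "?A \<inter> ?B = {}")
    case False
    then obtain w where "w \<in> ?A" "w \<in> ?B" by blast
    then show ?thesis using uv that[of "[u, w, v]"]
      by (auto simp: non_neighbours_def all_pairs_doubleton_iff insert_commute)
  next
    case True
    then obtain a b where "a \<in> ?A" "b \<in> ?B" "{a, b} \<notin> S"
      using non_neighbours_joined_by_non_edge[OF fin edges large uv adjacent] by blast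
    moreover have "a \<noteq> b" "a \<noteq> v" "b \<noteq> u"
      using calculation True adjacent by (auto simp: non_neighbours_def insert_commute)
    ultimately show ?thesis using uv adjacent that[of "[u, a, b, v]"]
      by (auto simp: non_neighbours_def all_pairs_doubleton_iff insert_commute)
  qed
qed

text \<open>A join of a vertex set T is a set of edges whose odd-degree vertices are exactly those of T.\<close>

lemma complement_join_of_pair:
  assumes "finite V" "S \<subseteq> all_pairs V" "large_non_neighbourhoods V S"
    and uv: "u \<in> V" "v \<in> V" "u \<noteq> v"
  shows "\<exists>J\<subseteq>all_pairs V - S. finite J \<and> card J \<le> 3 \<and> (\<forall>x. odd (degree J x) \<longleftrightarrow> x = u \<or> x = v)"
proof -
  obtain ws where ws: "ws \<noteq> []" "distinct ws" "hd ws = u" "last ws = v" "length ws \<le> 4"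
    "set (walk_edges ws) \<subseteq> all_pairs V - S"
    using complement_path_short[OF assms] .
  then have "odd (degree (set (walk_edges ws)) x) \<longleftrightarrow> x = u \<or> x = v" for x
    using odd_degree_walk_edges_iff walk_edges_if_distinct[OF ws(2)] ws(3,4) uv by auto
  moreover have "card (set (walk_edges ws)) \<le> 3"
    using card_length[of "walk_edges ws"] ws(5) by (simp add: length_walk_edges)
  ultimately show ?thesis using ws(6) by (intro exI[of _ "set (walk_edges ws)"]) auto
qed

lemma join_of_even_set:
  assumes "finite T" "even (card T)"
    and pair: "\<And>u v. u \<in> T \<Longrightarrow> v \<in> T \<Longrightarrow> u \<noteq> v \<Longrightarrow>
      \<exists>J\<subseteq>A. finite J \<and> card J \<le> k \<and> (\<forall>x. odd (degree J x) \<longleftrightarrow> x = u \<or> x = v)"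
  shows "\<exists>J\<subseteq>A. finite J \<and> card J \<le> k * (card T div 2) \<and> (\<forall>x. odd (degree J x) \<longleftrightarrow> x \<in> T)"
  using assms
proof (induction "card T" arbitrary: T rule: less_induct)
  case less
  show ?case
  proof (cases "T = {}")
    case True
    then show ?thesis by (intro exI[of _ "{}"]) (auto simp: degree_def)
  next
    case False
    then obtain u where "u \<in> T" by blast
    moreover have "T \<noteq> {u}" using less.prems(2) by auto
    ultimately obtain v where uv: "u \<in> T" "v \<in> T" "u \<noteq> v" by blast
    define T' where "T' = T - {u, v}"
    have card_T': "card T' = card T - 2" and "2 \<le> card T"
      unfolding T'_def using uv less.prems(1) card_mono[of T "{u, v}"] by (auto simp: card_Diff_subset)
    then have "card T' < card T" "finite T'" "even (card T')" unfolding T'_def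
      using less.prems by auto
    then obtain J' where J': "J' \<subseteq> A" "finite J'" "card J' \<le> k * (card T' div 2)"
      "\<forall>x. odd (degree J' x) \<longleftrightarrow> x \<in> T'"
      using less.hyps[of T'] less.prems(3) unfolding T'_def by blast
    obtain J1 where J1: "J1 \<subseteq> A" "finite J1" "card J1 \<le> k"
      "\<forall>x. odd (degree J1 x) \<longleftrightarrow> x = u \<or> x = v"
      using less.prems(3)[OF uv] by blast
    have "card (sym_diff J' J1) \<le> card J' + card J1"
      using card_Un_le[of "J' - J1" "J1 - J'"] J'(2) J1(2) card_mono[of J' "J' - J1"]
        card_mono[of J1 "J1 - J'"] by auto
    moreover have "card T div 2 = Suc (card T' div 2)"
      using card_T' \<open>2 \<le> card T\<close> by presburger
    moreover have "\<forall>x. odd (degree (sym_diff J' J1) x) \<longleftrightarrow> x \<in> T"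
      using odd_degree_sym_diff[OF J'(2) J1(2)] J'(4) J1(4) uv unfolding T'_def by auto
    ultimately show ?thesis using J' J1 by (intro exI[of _ "sym_diff J' J1"]) auto
  qed
qed

lemma N_ext_le_card_join:
  assumes fin: "finite V" and edges: "S \<subseteq> all_pairs V" and conn: "connected_graph V S"
    and J: "J \<subseteq> all_pairs V - S" "finite J" and odd: "\<forall>x. odd (degree J x) \<longleftrightarrow> odd (degree S x)"
  shows "N_ext V S \<le> enat (card J)"
proof -
  have finS: "finite S" using fin edges finite_all_pairs finite_subset by blast
  have "S \<inter> J = {}" using J(1) by blast
  then have "even (degree (S \<union> J) x)" for x
    using degree_Un_disjoint[OF finS J(2)] odd by simp
  moreover have "connected_graph V (S \<union> J)"
    using conn rtrancl_mono[of "{(x, y). {x, y} \<in> S}" "{(x, y). {x, y} \<in> S \<union> J}"]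
    unfolding connected_graph_def by blast
  ultimately have "eulerian (S \<union> J)"
    using eulerian_if_connected_even_degrees[of "S \<union> J" V] finS J edges by blast
  then have "eulerian_extension V S (S \<union> J)"
    unfolding eulerian_extension_def using edges J by auto
  moreover have "(S \<union> J) - S = J" using J by auto
  ultimately show ?thesis unfolding N_ext_def by (metis (mono_tags, lifting) INF_lower mem_Collect_eq)
qed

lemma N_ext_le_three_t_odd:
  assumes fin: "finite V" and edges: "S \<subseteq> all_pairs V" and "connected_graph V S"
    and large: "large_non_neighbourhoods V S"
  shows "N_ext V S \<le> enat (3 * t_odd V S)"
proof -
  define T where "T = {v\<in>V. odd (degree S v)}"
  obtain J where J: "J \<subseteq> all_pairs V - S" "finite J" "card J \<le> 3 * (card T div 2)"
      "\<forall>x. odd (degree J x) \<longleftrightarrow> x \<in> T"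
    using join_of_even_set[of T "all_pairs V - S" 3] complement_join_of_pair[OF fin edges large]
      even_card_odd_degree[OF fin edges] fin unfolding T_def by auto
  have "x \<in> T \<longleftrightarrow> odd (degree S x)" for x
    using degree_eq_0_if_notin[OF edges] unfolding T_def by (cases "x \<in> V") auto
  then have "N_ext V S \<le> enat (card J)"
    using N_ext_le_card_join[OF assms(1-3) J(1,2)] J(4) by simp
  also have "\<dots> \<le> enat (3 * t_odd V S)" using J(3) unfolding t_odd_def T_def by simp
  finally show ?thesis .
qed

lemma large_non_neighbourhoods_if_sparse:
  fixes r s :: real
  assumes fin: "finite V" and edges: "S \<subseteq> all_pairs V" and r: "0 \<le> r" and s: "1/4 \<le> s"
    and deg: "\<And>u. u \<in> V \<Longrightarrow> real (degree S u) + s < (real (card V) - 1) * max (1/2) (1 - r)"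
    and size: "real (card S) < real (card V) * (real (card V) - 1) * r\<^sup>2 + s\<^sup>2"
  shows "large_non_neighbourhoods V S"
  unfolding large_non_neighbourhoods_def
proof (intro ballI impI)
  fix u v assume uv: "u \<in> V" "v \<in> V" "u \<noteq> v"
  let ?a = "card (non_neighbours V S u)" and ?b = "card (non_neighbours V S v)"
  define N where "N = real (card V)"
  define M where "M = max (1/2) (1 - r)"
  have "card {u, v} \<le> card V" using uv fin by (intro card_mono) auto
  then have V2: "2 \<le> card V" using uv by simp
  have nn: "(N - 1) * (1 - M) + s < real (card (non_neighbours V S w))" if "w \<in> V" for w
  proof -
    have "real (card (non_neighbours V S w)) + real (degree S w) = N - 1"
      using card_non_neighbours_add_degree[OF fin edges that] V2 unfolding N_def
      by (simp add: of_nat_diff flip: of_nat_add)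
    then show ?thesis using deg[OF that] unfolding M_def N_def by (simp add: algebra_simps)
  qed
  show "card V - 2 < ?a + ?b \<or> card S < ?a * ?b"
  proof (cases "1/2 \<le> r")
    case True
    then have M: "M = 1/2" unfolding M_def by simp
    have "(N - 1) / 2 + s < real ?a" "(N - 1) / 2 + s < real ?b"
      using nn[OF uv(1)] nn[OF uv(2)] unfolding M by simp_all
    then have "N - 2 < real ?a + real ?b" using s by argo
    moreover have "real (card V - 2) = N - 2" using V2 unfolding N_def by (simp add: of_nat_diff)
    ultimately have "real (card V - 2) < real (?a + ?b)" by simp
    then show ?thesis by simp
  next
    case False
    then have M: "M = 1 - r" unfolding M_def by auto
    define x where "x = (N - 1) * r + s"
    have "0 \<le> x" using V2 r s unfolding x_def N_def by simp
    moreover have "x < real ?a" "x < real ?b" using nn[OF uv(1)] nn[OF uv(2)] M unfolding x_def by auto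
    ultimately have "x * x \<le> real ?a * real ?b" by (intro mult_mono) auto
    moreover have "x * x = N * (N - 1) * r\<^sup>2 + s\<^sup>2 + (N - 1) * r * (2 * s - r)"
      unfolding x_def by (simp add: algebra_simps power2_eq_square)
    moreover have "0 \<le> (N - 1) * r * (2 * s - r)" using False r s V2 unfolding N_def by simp
    ultimately have "real (card S) < real (?a * ?b)" using size unfolding N_def by simp
    then show ?thesis by (simp only: of_nat_less_iff) simp
  qed
qed

section \<open>Concentration in the random graph\<close>

definition graph_weight :: "nat \<Rightarrow> (nat set \<Rightarrow> real) \<Rightarrow> nat set set \<Rightarrow> real" where
  "graph_weight n p S = (\<Prod>h\<in>S. p h) * (\<Prod>h\<in>Kn_edges n - S. 1 - p h)"

lemma finite_Kn_edges: "finite (Kn_edges n)"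
  unfolding Kn_edges_def by (simp add: finite_all_pairs)

lemma graph_prob_eq_sum_graph_weight:
  "graph_prob n p P = (\<Sum>S\<in>Pow (Kn_edges n). if P S then graph_weight n p S else 0)"
proof -
  have "graph_prob n p P = (\<Sum>S\<in>{S \<in> Pow (Kn_edges n). P S}. graph_weight n p S)"
    unfolding graph_prob_def graph_weight_def by (rule sum.cong) auto
  also have "\<dots> = (\<Sum>S\<in>Pow (Kn_edges n). if P S then graph_weight n p S else 0)"
    by (rule sum.inter_filter) (simp add: finite_Kn_edges)
  finally show ?thesis .
qed

lemma graph_weight_nonneg:
  assumes "\<forall>h \<in> Kn_edges n. 0 \<le> p h \<and> p h \<le> 1" "S \<subseteq> Kn_edges n"
  shows "0 \<le> graph_weight n p S"
  unfolding graph_weight_def using assms by (intro mult_nonneg_nonneg prod_nonneg) auto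

lemma sum_graph_weight: "(\<Sum>S\<in>Pow (Kn_edges n). graph_weight n p S) = 1"
proof -
  have "(\<Sum>S\<in>Pow (Kn_edges n). graph_weight n p S) = (\<Prod>h\<in>Kn_edges n. p h + (1 - p h))"
    unfolding graph_weight_def by (rule prod_add[OF finite_Kn_edges, symmetric])
  then show ?thesis by simp
qed

lemma graph_prob_Not: "graph_prob n p (\<lambda>S. \<not> P S) = 1 - graph_prob n p P"
proof -
  have "graph_prob n p P + graph_prob n p (\<lambda>S. \<not> P S) = (\<Sum>S\<in>Pow (Kn_edges n). graph_weight n p S)"
    unfolding graph_prob_eq_sum_graph_weight sum.distrib[symmetric] by (intro sum.cong) auto
  then show ?thesis using sum_graph_weight[of n p] by simp
qed

lemma graph_prob_mono:
  assumes "\<forall>h \<in> Kn_edges n. 0 \<le> p h \<and> p h \<le> 1"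
    and "\<And>S. S \<subseteq> Kn_edges n \<Longrightarrow> P S \<Longrightarrow> Q S"
  shows "graph_prob n p P \<le> graph_prob n p Q"
  unfolding graph_prob_eq_sum_graph_weight
  by (rule sum_mono) (use assms graph_weight_nonneg[OF assms(1)] in auto)

lemma graph_prob_disj_le:
  assumes "\<forall>h \<in> Kn_edges n. 0 \<le> p h \<and> p h \<le> 1"
  shows "graph_prob n p (\<lambda>S. P S \<or> Q S) \<le> graph_prob n p P + graph_prob n p Q"
  unfolding graph_prob_eq_sum_graph_weight sum.distrib[symmetric]
  by (rule sum_mono) (use graph_weight_nonneg[OF assms] in auto)

lemma graph_prob_Bex_le:
  assumes "\<forall>h \<in> Kn_edges n. 0 \<le> p h \<and> p h \<le> 1" "finite U"
  shows "graph_prob n p (\<lambda>S. \<exists>u\<in>U. P u S) \<le> (\<Sum>u\<in>U. graph_prob n p (P u))"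
  using assms(2)
proof (induction U rule: finite_induct)
  case empty
  then show ?case by (simp add: graph_prob_def)
next
  case (insert x U)
  have "graph_prob n p (\<lambda>S. \<exists>u\<in>insert x U. P u S)
      \<le> graph_prob n p (P x) + graph_prob n p (\<lambda>S. \<exists>u\<in>U. P u S)"
    using graph_prob_disj_le[OF assms(1), of "P x"] by simp
  then show ?case using insert by simp
qed

lemma sum_graph_weight_exp_card_le:
  assumes p: "\<forall>h \<in> Kn_edges n. 0 \<le> p h \<and> p h \<le> 1" and B: "B \<subseteq> Kn_edges n"
    and l: "0 \<le> l" "l \<le> 1"
  shows "(\<Sum>S\<in>Pow (Kn_edges n). graph_weight n p S * exp (l * real (card (S \<inter> B))))
    \<le> exp ((l + l\<^sup>2) * (\<Sum>h\<in>B. p h))"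
proof -
  define K where "K = Kn_edges n"
  define c where "c h = (if h \<in> B then exp l else 1)" for h
  have "exp (l * real (card (S \<inter> B))) = (\<Prod>h\<in>S. c h)" if "S \<subseteq> K" for S
  proof -
    have "finite S" using that finite_Kn_edges finite_subset unfolding K_def by blast
    then have "(\<Prod>h\<in>S. c h) = exp l ^ card (S \<inter> B)"
      unfolding c_def by (simp add: prod.If_cases Int_def)
    then show ?thesis by (simp add: exp_of_nat_mult[symmetric] mult.commute)
  qed
  then have "(\<Sum>S\<in>Pow K. graph_weight n p S * exp (l * real (card (S \<inter> B))))
      = (\<Sum>S\<in>Pow K. (\<Prod>h\<in>S. p h * c h) * (\<Prod>h\<in>K - S. 1 - p h))"
    unfolding graph_weight_def K_def[symmetric] by (intro sum.cong) (auto simp: prod.distrib)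
  also have "\<dots> = (\<Prod>h\<in>K. p h * c h + (1 - p h))"
    by (rule prod_add[symmetric]) (simp add: K_def finite_Kn_edges)
  also have "\<dots> \<le> (\<Prod>h\<in>K. exp (if h \<in> B then p h * (l + l\<^sup>2) else 0))"
  proof (rule prod_mono)
    fix h assume "h \<in> K"
    then have ph: "0 \<le> p h" "p h \<le> 1" using p unfolding K_def by auto
    have "p h * exp l + (1 - p h) \<le> 1 + p h * (l + l\<^sup>2)"
      using mult_left_mono[OF exp_bound[OF l] ph(1)] by (simp add: algebra_simps)
    also have "\<dots> \<le> exp (p h * (l + l\<^sup>2))" by (rule exp_ge_add_one_self)
    finally show "0 \<le> p h * c h + (1 - p h) \<and>
        p h * c h + (1 - p h) \<le> exp (if h \<in> B then p h * (l + l\<^sup>2) else 0)"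
      using ph unfolding c_def by auto
  qed
  also have "\<dots> = exp (\<Sum>h\<in>B. p h * (l + l\<^sup>2))"
    using B by (simp add: exp_sum[symmetric] K_def finite_Kn_edges sum.If_cases Int_absorb1)
  also have "\<dots> = exp ((l + l\<^sup>2) * (\<Sum>h\<in>B. p h))"
    by (simp add: sum_distrib_right mult.commute)
  finally show ?thesis unfolding K_def .
qed

lemma graph_prob_card_Int_ge_le:
  fixes a m :: real
  assumes p: "\<forall>h \<in> Kn_edges n. 0 \<le> p h \<and> p h \<le> 1" and B: "B \<subseteq> Kn_edges n"
    and m: "real (card B) \<le> m" and a: "0 < a" "a \<le> 2 * m"
  shows "graph_prob n p (\<lambda>S. (\<Sum>h\<in>B. p h) + a \<le> real (card (S \<inter> B))) \<le> exp (- (a\<^sup>2) / (4 * m))"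
proof -
  define K where "K = Kn_edges n"
  define \<mu> where "\<mu> = (\<Sum>h\<in>B. p h)"
  define l where "l = a / (2 * m)"
  have l: "0 \<le> l" "l \<le> 1" and "0 < m" using a unfolding l_def by (auto simp: field_simps)
  have "graph_prob n p (\<lambda>S. \<mu> + a \<le> real (card (S \<inter> B)))
      \<le> (\<Sum>S\<in>Pow K. graph_weight n p S * exp (l * (real (card (S \<inter> B)) - \<mu> - a)))"
    unfolding graph_prob_eq_sum_graph_weight K_def
  proof (rule sum_mono)
    fix S assume "S \<in> Pow (Kn_edges n)"
    then have "0 \<le> graph_weight n p S" using graph_weight_nonneg[OF p] by auto
    moreover have "\<mu> + a \<le> real (card (S \<inter> B)) \<Longrightarrow> 1 \<le> exp (l * (real (card (S \<inter> B)) - \<mu> - a))"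
      using l by simp
    ultimately show "(if \<mu> + a \<le> real (card (S \<inter> B)) then graph_weight n p S else 0)
        \<le> graph_weight n p S * exp (l * (real (card (S \<inter> B)) - \<mu> - a))"
      by (auto simp: mult_le_cancel_left1)
  qed
  also have "\<dots> = exp (- l * (\<mu> + a)) *
      (\<Sum>S\<in>Pow K. graph_weight n p S * exp (l * real (card (S \<inter> B))))"
    by (simp add: sum_distrib_left exp_add[symmetric] algebra_simps)
  also have "\<dots> \<le> exp (- l * (\<mu> + a)) * exp ((l + l\<^sup>2) * \<mu>)"
    using sum_graph_weight_exp_card_le[OF p B l] unfolding K_def \<mu>_def by simp
  also have "\<dots> = exp (l\<^sup>2 * \<mu> - l * a)"
    by (simp add: exp_add[symmetric] algebra_simps)
  also have "\<dots> \<le> exp (l\<^sup>2 * m - l * a)"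
  proof -
    have "\<mu> \<le> real (card B)" using sum_bounded_above[of B p 1] p B unfolding \<mu>_def by auto
    then show ?thesis using m by (simp add: mult_left_mono)
  qed
  also have "l\<^sup>2 * m - l * a = - (a\<^sup>2) / (4 * m)"
    unfolding l_def using \<open>0 < m\<close> by (simp add: field_simps power2_eq_square)
  finally show ?thesis unfolding \<mu>_def .
qed

lemma Kn_edges_at_vertex:
  assumes "u \<in> {1..n}"
  shows "{h \<in> Kn_edges n. u \<in> h} = (\<lambda>v. {u, v}) ` ({1..n} - {u})"
proof (intro equalityI subsetI)
  fix h assume h: "h \<in> {h \<in> Kn_edges n. u \<in> h}"
  then obtain v where "h = {u, v}" "u \<noteq> v"
    using all_pairs_obtain_other_end unfolding Kn_edges_def by blast
  moreover have "v \<in> {1..n}"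
    using h calculation unfolding Kn_edges_def by (auto simp: all_pairs_doubleton_iff)
  ultimately show "h \<in> (\<lambda>v. {u, v}) ` ({1..n} - {u})" by auto
qed (use assms in \<open>auto simp: Kn_edges_def all_pairs_doubleton_iff\<close>)

lemma inj_on_doubleton: "inj_on (\<lambda>v. {u, v}) (A - {u})"
  by (auto simp: inj_on_def doubleton_eq_iff)

lemma graph_prob_degree_ge_le:
  assumes p: "\<forall>h \<in> Kn_edges n. 0 \<le> p h \<and> p h \<le> 1" and u: "u \<in> {1..n}"
    and a: "0 < a" "a \<le> 2 * (real n - 1)"
  shows "graph_prob n p (\<lambda>S. (\<Sum>v\<in>{1..n} - {u}. p {u, v}) + a \<le> real (degree S u))
    \<le> exp (- (a\<^sup>2) / (4 * (real n - 1)))"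
proof -
  define B where "B = {h \<in> Kn_edges n. u \<in> h}"
  have card_B: "real (card B) = real n - 1"
    unfolding B_def Kn_edges_at_vertex[OF u] using u by (simp add: card_image inj_on_doubleton)
  have sum_B: "(\<Sum>h\<in>B. p h) = (\<Sum>v\<in>{1..n} - {u}. p {u, v})"
    unfolding B_def Kn_edges_at_vertex[OF u] by (simp add: sum.reindex inj_on_doubleton)
  have "graph_prob n p (\<lambda>S. (\<Sum>v\<in>{1..n} - {u}. p {u, v}) + a \<le> real (degree S u))
      \<le> graph_prob n p (\<lambda>S. (\<Sum>h\<in>B. p h) + a \<le> real (card (S \<inter> B)))"
  proof (rule graph_prob_mono[OF p])
    fix S assume "S \<subseteq> Kn_edges n"
    then have "{e \<in> S. u \<in> e} = S \<inter> B" unfolding B_def by auto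
    then show "(\<Sum>v\<in>{1..n} - {u}. p {u, v}) + a \<le> real (degree S u) \<Longrightarrow>
        (\<Sum>h\<in>B. p h) + a \<le> real (card (S \<inter> B))"
      unfolding degree_def sum_B by simp
  qed
  also have "\<dots> \<le> exp (- (a\<^sup>2) / (4 * (real n - 1)))"
    using graph_prob_card_Int_ge_le[OF p _ _ a, of B] card_B unfolding B_def by simp
  finally show ?thesis .
qed

lemma card_Kn_edges_le: "card (Kn_edges n) \<le> n\<^sup>2"
proof -
  have "Kn_edges n \<subseteq> (\<lambda>(a, b). {a, b}) ` ({1..n} \<times> {1..n})"
    unfolding Kn_edges_def all_pairs_def by auto
  then have "card (Kn_edges n) \<le> card ({1..n} \<times> {1..n})"
    by (meson card_image_le finite_SigmaI finite_atLeastAtMost card_mono finite_imageI le_trans)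
  then show ?thesis by (simp add: card_cartesian_product power2_eq_square)
qed

lemma graph_prob_card_ge_le:
  assumes p: "\<forall>h \<in> Kn_edges n. 0 \<le> p h \<and> p h \<le> 1" and a: "0 < a" "a \<le> 2 * (real n)\<^sup>2"
  shows "graph_prob n p (\<lambda>S. (\<Sum>h\<in>Kn_edges n. p h) + a \<le> real (card S))
    \<le> exp (- (a\<^sup>2) / (4 * (real n)\<^sup>2))"
proof -
  have "graph_prob n p (\<lambda>S. (\<Sum>h\<in>Kn_edges n. p h) + a \<le> real (card S))
      \<le> graph_prob n p (\<lambda>S. (\<Sum>h\<in>Kn_edges n. p h) + a \<le> real (card (S \<inter> Kn_edges n)))"
    by (rule graph_prob_mono[OF p]) (simp add: Int_absorb2)
  also have "\<dots> \<le> exp (- (a\<^sup>2) / (4 * (real n)\<^sup>2))"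
    by (rule graph_prob_card_Int_ge_le[OF p order.refl _ a])
      (metis card_Kn_edges_le of_nat_le_iff of_nat_power)
  finally show ?thesis .
qed

lemma sum_Kn_edges_eq_alpha_e:
  assumes "2 \<le> n"
  shows "(\<Sum>h\<in>Kn_edges n. p h) = real n * (real n - 1) / 2 * alpha_e n p"
proof -
  have "even (n * (n - 1))" by auto
  then have "2 * (n choose 2) = n * (n - 1)" by (simp add: choose_two)
  then have "real (2 * (n choose 2)) = real (n * (n - 1))" by (simp only:)
  then have C: "real (n choose 2) = real n * (real n - 1) / 2"
    using assms by (simp add: of_nat_diff)
  have "real n * (real n - 1) \<noteq> 0" using assms by simp
  then show ?thesis unfolding alpha_e_def C by (simp add: field_simps)
qed

lemma sum_at_vertex_le_alpha_up:
  assumes "u \<in> {1..n}"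
  shows "(\<Sum>v\<in>{1..n} - {u}. p {u, v}) / real (n - 1) \<le> alpha_up n p"
  unfolding alpha_up_def using assms by (intro Max_ge) auto

lemma large_non_neighbourhoods_if_below_mean:
  fixes s :: real
  assumes n: "2 \<le> n" and s: "1/4 \<le> s" and p: "\<forall>h \<in> Kn_edges n. 0 \<le> p h \<and> p h \<le> 1"
    and up: "alpha_up n p \<le> max (1/2) (1 - sqrt (alpha_e n p / 2)) - 2 * s / (real n - 1)"
    and S: "S \<subseteq> Kn_edges n"
    and deg: "\<forall>u\<in>{1..n}. real (degree S u) < (\<Sum>v\<in>{1..n} - {u}. p {u, v}) + s"
    and size: "real (card S) < (\<Sum>h\<in>Kn_edges n. p h) + s\<^sup>2 / 2"
  shows "large_non_neighbourhoods {1..n} S"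
proof -
  define r where "r = sqrt (alpha_e n p / 2)"
  have n1: "1 < real n" using n by simp
  have ae: "0 \<le> alpha_e n p" unfolding alpha_e_def using p by (simp add: sum_nonneg)
  show ?thesis
  proof (rule large_non_neighbourhoods_if_sparse[of "{1..n}" S r s])
    show "finite {1..n}" "S \<subseteq> all_pairs {1..n}" "0 \<le> r" "1/4 \<le> s"
      using S s ae unfolding Kn_edges_def r_def by auto
  next
    fix u assume u: "u \<in> {1..n}"
    have "(\<Sum>v\<in>{1..n} - {u}. p {u, v}) \<le> (real n - 1) * alpha_up n p"
      using sum_at_vertex_le_alpha_up[OF u, of p] n1 by (simp add: of_nat_diff field_simps)
    also have "\<dots> \<le> (real n - 1) * (max (1/2) (1 - r) - 2 * s / (real n - 1))"
      using up n1 unfolding r_def by (intro mult_left_mono) auto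
    also have "\<dots> = (real n - 1) * max (1/2) (1 - r) - 2 * s"
      using n1 by (simp add: field_simps)
    finally have "(\<Sum>v\<in>{1..n} - {u}. p {u, v}) \<le> (real n - 1) * max (1/2) (1 - r) - 2 * s" .
    moreover have "real (degree S u) < (\<Sum>v\<in>{1..n} - {u}. p {u, v}) + s" using deg u by blast
    ultimately show "real (degree S u) + s < (real (card {1..n}) - 1) * max (1/2) (1 - r)"
      by simp
  next
    have "(\<Sum>h\<in>Kn_edges n. p h) = real n * (real n - 1) * r\<^sup>2"
      unfolding sum_Kn_edges_eq_alpha_e[OF n] r_def using ae by simp
    moreover have "0 < s\<^sup>2" using s by simp
    moreover have "card {1..n} = n" by simp
    ultimately show "real (card S) < real (card {1..n}) * (real (card {1..n}) - 1) * r\<^sup>2 + s\<^sup>2"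
      using size by (simp only:)
  qed
qed

lemma graph_prob_not_large_non_neighbourhoods_le:
  fixes s :: real
  assumes n: "2 \<le> n" and s: "1/4 \<le> s" "s \<le> real n - 1"
    and p: "\<forall>h \<in> Kn_edges n. 0 \<le> p h \<and> p h \<le> 1"
    and up: "alpha_up n p \<le> max (1/2) (1 - sqrt (alpha_e n p / 2)) - 2 * s / (real n - 1)"
  shows "graph_prob n p (\<lambda>S. \<not> large_non_neighbourhoods {1..n} S)
    \<le> real n * exp (- (s\<^sup>2) / (4 * (real n - 1))) + exp (- ((s\<^sup>2 / 2)\<^sup>2) / (4 * (real n)\<^sup>2))"
proof -
  define V where "V = {1..n}"
  define many_at where
    "many_at u S \<longleftrightarrow> (\<Sum>v\<in>V - {u}. p {u, v}) + s \<le> real (degree S u)"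
    for u and S :: "nat set set"
  define many where "many S \<longleftrightarrow> (\<Sum>h\<in>Kn_edges n. p h) + s\<^sup>2 / 2 \<le> real (card S)"
    for S :: "nat set set"
  have "graph_prob n p (\<lambda>S. \<not> large_non_neighbourhoods V S)
      \<le> graph_prob n p (\<lambda>S. (\<exists>u\<in>V. many_at u S) \<or> many S)"
  proof (rule graph_prob_mono[OF p])
    fix S assume "S \<subseteq> Kn_edges n" "\<not> large_non_neighbourhoods V S"
    then show "(\<exists>u\<in>V. many_at u S) \<or> many S"
      using large_non_neighbourhoods_if_below_mean[OF n s(1) p up, of S]
      unfolding many_at_def many_def V_def by (meson not_le)
  qed
  also have "\<dots> \<le> graph_prob n p (\<lambda>S. \<exists>u\<in>V. many_at u S) + graph_prob n p many"
    by (rule graph_prob_disj_le[OF p])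
  also have "\<dots> \<le> (\<Sum>u\<in>V. graph_prob n p (many_at u)) + graph_prob n p many"
    using graph_prob_Bex_le[OF p, of V many_at] unfolding V_def by simp
  also have "\<dots> \<le> (\<Sum>u\<in>V. exp (- (s\<^sup>2) / (4 * (real n - 1)))) + exp (- ((s\<^sup>2 / 2)\<^sup>2) / (4 * (real n)\<^sup>2))"
  proof (intro add_mono sum_mono)
    show "graph_prob n p (many_at u) \<le> exp (- (s\<^sup>2) / (4 * (real n - 1)))" if "u \<in> V" for u
      using graph_prob_degree_ge_le[OF p, of u s] that s unfolding many_at_def V_def by simp
    have "s\<^sup>2 \<le> (real n)\<^sup>2" using s by (intro power_mono) auto
    then have "s\<^sup>2 / 2 \<le> 2 * (real n)\<^sup>2" using zero_le_power2[of "real n"] by linarith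
    then show "graph_prob n p many \<le> exp (- ((s\<^sup>2 / 2)\<^sup>2) / (4 * (real n)\<^sup>2))"
      unfolding many_def by (intro graph_prob_card_ge_le[OF p]) (use s in auto)
  qed
  finally show ?thesis unfolding V_def by simp
qed

lemma graph_prob_N_ext_le_three_t_odd_ge:
  assumes p: "\<forall>h \<in> Kn_edges n. 0 \<le> p h \<and> p h \<le> 1"
  shows "1 - graph_prob n p (\<lambda>G. \<not> connected_graph {1..n} G)
      - graph_prob n p (\<lambda>G. \<not> large_non_neighbourhoods {1..n} G)
    \<le> graph_prob n p (\<lambda>G. N_ext {1..n} G \<le> enat (3 * t_odd {1..n} G))"
proof -
  have "graph_prob n p (\<lambda>G. \<not> N_ext {1..n} G \<le> enat (3 * t_odd {1..n} G))
      \<le> graph_prob n p (\<lambda>G. \<not> connected_graph {1..n} G \<or> \<not> large_non_neighbourhoods {1..n} G)"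
    by (rule graph_prob_mono[OF p]) (use N_ext_le_three_t_odd in \<open>auto simp: Kn_edges_def\<close>)
  also have "\<dots> \<le> graph_prob n p (\<lambda>G. \<not> connected_graph {1..n} G)
      + graph_prob n p (\<lambda>G. \<not> large_non_neighbourhoods {1..n} G)"
    by (rule graph_prob_disj_le[OF p])
  finally show ?thesis by (simp add: graph_prob_Not)
qed

lemma eventually_slack_bounds:
  fixes \<gamma> :: real
  assumes "0 < \<gamma>" "\<gamma> < 1/2"
  defines "s \<equiv> \<lambda>n::nat. (real n - 1) / (2 * real n powr \<gamma>)"
  shows "eventually (\<lambda>n. 1/4 \<le> s n \<and> s n \<le> real n - 1 \<and>
    real n * exp (- ((s n)\<^sup>2) / (4 * (real n - 1))) + exp (- (((s n)\<^sup>2 / 2)\<^sup>2) / (4 * (real n)\<^sup>2))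
      \<le> exp (- 1 * (ln (real n))\<^sup>2)) sequentially"
  unfolding s_def using assms by (intro eventually_conj) real_asymp+

theorem theorem1:
  fixes \<beta> \<gamma> :: real
  assumes "0 < \<beta>" "\<beta> < 1/2" "0 < \<gamma>" "\<gamma> < 1/2 - \<beta>"
  shows "\<exists>D > 0. \<exists>N. \<forall>n \<ge> N. \<forall>p :: nat set \<Rightarrow> real.
     n \<ge> 2 \<longrightarrow>
     (\<forall>h \<in> Kn_edges n. 0 \<le> p h \<and> p h \<le> 1) \<longrightarrow>
     1 / real n powr \<beta> \<le> alpha_low n p \<longrightarrow>
     alpha_low n p \<le> alpha_up n p \<longrightarrow>
     alpha_up n p \<le> max (1/2) (1 - sqrt (alpha_e n p / 2)) - 1 / real n powr \<gamma> \<longrightarrow>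
     graph_prob n p (\<lambda>G. N_ext {1..n} G \<le> enat (3 * t_odd {1..n} G))
       \<ge> 1 - exp (- D * (ln (real n))\<^sup>2)
           - graph_prob n p (\<lambda>G. \<not> connected_graph {1..n} G)"
proof -
  define s where "s = (\<lambda>n::nat. (real n - 1) / (2 * real n powr \<gamma>))"
  obtain N where N: "\<And>n. N \<le> n \<Longrightarrow> 1/4 \<le> s n \<and> s n \<le> real n - 1 \<and>
    real n * exp (- ((s n)\<^sup>2) / (4 * (real n - 1))) + exp (- (((s n)\<^sup>2 / 2)\<^sup>2) / (4 * (real n)\<^sup>2))
      \<le> exp (- 1 * (ln (real n))\<^sup>2)"
    using eventually_slack_bounds[of \<gamma>] assms unfolding eventually_sequentially s_def by auto
  show ?thesis
  proof (intro exI[of _ "1::real"] conjI exI[of _ N] allI impI)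
    fix n :: nat and p :: "nat set \<Rightarrow> real"
    assume n: "N \<le> n" "2 \<le> n" and p: "\<forall>h \<in> Kn_edges n. 0 \<le> p h \<and> p h \<le> 1"
      and up: "alpha_up n p \<le> max (1/2) (1 - sqrt (alpha_e n p / 2)) - 1 / real n powr \<gamma>"
    have "2 * s n / (real n - 1) = 1 / real n powr \<gamma>"
      using n(2) unfolding s_def by (simp add: field_simps)
    then have "graph_prob n p (\<lambda>G. \<not> large_non_neighbourhoods {1..n} G) \<le> exp (- 1 * (ln (real n))\<^sup>2)"
      using graph_prob_not_large_non_neighbourhoods_le[OF n(2) _ _ p, of "s n"] N[OF n(1)] up
      by fastforce
    then show "1 - exp (- 1 * (ln (real n))\<^sup>2) - graph_prob n p (\<lambda>G. \<not> connected_graph {1..n} G)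
        \<le> graph_prob n p (\<lambda>G. N_ext {1..n} G \<le> enat (3 * t_odd {1..n} G))"
      using graph_prob_N_ext_le_three_t_odd_ge[OF p] by linarith
  qed simp
qed

end
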